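(* Let $X\neq\emptyset$ be countable, $F=(F_x)_{x\in X}$ a family of finite-dimensional complex vector spaces, and $A\colon\Gamma(X;F)\to\Gamma(X;F)$ a continuous linear operator whose dual operator $A'\colon\Gamma_c(X;F')\to\Gamma_c(X;F')$ is injective. Then for every finite nonempty $K\subseteq X$ there exist $\varepsilon>0$ and a finite nonempty $K'\subseteq X$ such that $\overline{A(U_K)}\supseteq\varepsilon U_{K'}$, where the closure is taken in $\Gamma(X;F)$.
   Context: $\Gamma(X;F)=\prod_x F_x$ carries the product topology, i.e. the topology generated by seminorms $p_K(f)=\sum_{x\in K}\|f(x)\|_x$ for finite $K\subseteq X$, with $\|\cdot\|_x$ a fixed norm on $F_x$. $U_K:=\{f\in\Gamma(X;F)\mid p_K(f)\le1\}$. $\Gamma_c(X;F')$ is the space of finitely supported sections of the dual bundle $F'=(F'_x)$, identified with the continuous dual of $\Gamma(X;F)$ via $(\varphi,f)=\sum_x\varphi(x)(f(x))$; the dual operator is defined by $(A'\varphi,f)=(\varphi,Af)$. *)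

theory Defs
  imports "HOL-Analysis.Analysis"
begin

text \<open>Model: the fibre F_x is the d x -dimensional complex space, represented as
  functions nat => complex vanishing from index d x on (i.e. C^(d x)).\<close>

definition fiber :: "nat \<Rightarrow> (nat \<Rightarrow> complex) set" where
  "fiber n = {v. \<forall>i\<ge>n. v i = 0}"

text \<open>Gamma(X;F): all sections (X is the whole countable type 'x).\<close>
definition sections :: "('x \<Rightarrow> nat) \<Rightarrow> ('x \<Rightarrow> nat \<Rightarrow> complex) set" where
  "sections d = {f. \<forall>x. f x \<in> fiber (d x)}"

definition norm_on :: "nat \<Rightarrow> ((nat \<Rightarrow> complex) \<Rightarrow> real) \<Rightarrow> bool" where
  "norm_on n N \<longleftrightarrow>
     (\<forall>v\<in>fiber n. 0 \<le> N v \<and> (N v = 0 \<longleftrightarrow> (\<forall>i. v i = 0))) \<and>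
     (\<forall>c. \<forall>v\<in>fiber n. N (\<lambda>i. c * v i) = cmod c * N v) \<and>
     (\<forall>v\<in>fiber n. \<forall>w\<in>fiber n. N (\<lambda>i. v i + w i) \<le> N v + N w)"

definition pK :: "('x \<Rightarrow> (nat \<Rightarrow> complex) \<Rightarrow> real) \<Rightarrow> 'x set \<Rightarrow> ('x \<Rightarrow> nat \<Rightarrow> complex) \<Rightarrow> real" where
  "pK N K f = (\<Sum>x\<in>K. N x (f x))"

definition Uset :: "('x \<Rightarrow> nat) \<Rightarrow> ('x \<Rightarrow> (nat \<Rightarrow> complex) \<Rightarrow> real) \<Rightarrow> 'x set
                     \<Rightarrow> ('x \<Rightarrow> nat \<Rightarrow> complex) set" where
  "Uset d N K = {f \<in> sections d. pK N K f \<le> 1}"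

definition gamma_top :: "('x \<Rightarrow> nat) \<Rightarrow> ('x \<Rightarrow> (nat \<Rightarrow> complex) \<Rightarrow> real)
                          \<Rightarrow> ('x \<Rightarrow> nat \<Rightarrow> complex) topology" where
  "gamma_top d N = subtopology
     (topology_generated_by
        {{g \<in> sections d. pK N K (\<lambda>x i. g x i - f x i) < r} | f K r. f \<in> sections d \<and> finite K \<and> r > 0})
     (sections d)"

definition scale_set :: "real \<Rightarrow> ('x \<Rightarrow> nat \<Rightarrow> complex) set \<Rightarrow> ('x \<Rightarrow> nat \<Rightarrow> complex) set" where
  "scale_set e U = (\<lambda>f. \<lambda>x i. complex_of_real e * f x i) ` U"

definition linear_on_sections :: "('x \<Rightarrow> nat) \<Rightarrow> (('x \<Rightarrow> nat \<Rightarrow> complex) \<Rightarrow> ('x \<Rightarrow> nat \<Rightarrow> complex)) \<Rightarrow> bool" where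
  "linear_on_sections d A \<longleftrightarrow>
     A ` sections d \<subseteq> sections d \<and>
     (\<forall>f\<in>sections d. \<forall>g\<in>sections d. A (\<lambda>x i. f x i + g x i) = (\<lambda>x i. A f x i + A g x i)) \<and>
     (\<forall>c. \<forall>f\<in>sections d. A (\<lambda>x i. c * f x i) = (\<lambda>x i. c * A f x i))"

text \<open>Gamma_c(X;F'): finitely supported sections of the dual bundle; phi x is a
  complex-linear functional on the fibre F_x (its values off the fibre are irrelevant).\<close>
definition dual_support :: "('x \<Rightarrow> nat) \<Rightarrow> ('x \<Rightarrow> (nat \<Rightarrow> complex) \<Rightarrow> complex) \<Rightarrow> 'x set" where
  "dual_support d \<phi> = {x. \<exists>v\<in>fiber (d x). \<phi> x v \<noteq> 0}"

definition dual_sections :: "('x \<Rightarrow> nat) \<Rightarrow> ('x \<Rightarrow> (nat \<Rightarrow> complex) \<Rightarrow> complex) set" where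
  "dual_sections d = {\<phi>.
     (\<forall>x. (\<forall>v\<in>fiber (d x). \<forall>w\<in>fiber (d x). \<phi> x (\<lambda>i. v i + w i) = \<phi> x v + \<phi> x w) \<and>
          (\<forall>c. \<forall>v\<in>fiber (d x). \<phi> x (\<lambda>i. c * v i) = c * \<phi> x v)) \<and>
     finite (dual_support d \<phi>)}"

definition pairing :: "('x \<Rightarrow> nat) \<Rightarrow> ('x \<Rightarrow> (nat \<Rightarrow> complex) \<Rightarrow> complex) \<Rightarrow> ('x \<Rightarrow> nat \<Rightarrow> complex) \<Rightarrow> complex" where
  "pairing d \<phi> f = (\<Sum>x\<in>dual_support d \<phi>. \<phi> x (f x))"

text \<open>The dual operator A' (defined by (A' phi, f) = (phi, A f)) is injective on Gamma_c:
  A' phi = 0 (as a functional on Gamma) forces phi = 0.\<close>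
definition dual_op_injective :: "('x \<Rightarrow> nat) \<Rightarrow> (('x \<Rightarrow> nat \<Rightarrow> complex) \<Rightarrow> ('x \<Rightarrow> nat \<Rightarrow> complex)) \<Rightarrow> bool" where
  "dual_op_injective d A \<longleftrightarrow>
     (\<forall>\<phi>\<in>dual_sections d. \<forall>\<psi>\<in>dual_sections d.
        (\<forall>f\<in>sections d. pairing d \<phi> (A f) = pairing d \<psi> (A f)) \<longrightarrow>
        (\<forall>x. \<forall>v\<in>fiber (d x). \<phi> x v = \<psi> x v))"

end

theory Submission
  imports Defs "HOL-Library.Function_Algebras"
begin

text \<open>
  Injectivity of \<open>A'\<close> means that for every finite set \<open>L\<close> of points the map
  \<open>f \<mapsto> (A f)|\<^sub>L\<close> is onto: a linear functional on the sections over \<open>L\<close> annihilating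
  its range would be a nonzero finitely supported dual section killed by \<open>A'\<close>.
  The \<open>K\<close>-parts of the sections \<open>f\<close> with \<open>(A f)|\<^sub>L = 0\<close> form a finite-dimensional space
  that shrinks as \<open>L\<close> grows, so it is constant from some finite \<open>L\<^sub>0 \<supseteq> K\<close> on. Consequently
  every right-hand side vanishing on \<open>L\<^sub>0\<close> is matched on any finite window by a section
  vanishing on \<open>K\<close>, a correction that does not change \<open>p\<^sub>K\<close>.
  Now take \<open>y \<in> \<epsilon> U\<^bsub>L\<^sub>0\<^esub>\<close>. Since the fibre norms dominate the coordinates, a fixed linear
  combination of preimages of the unit sections matches \<open>y\<close> on \<open>L\<^sub>0\<close> with \<open>p\<^sub>K < 1\<close>;
  correcting it on a finite window gives a point of \<open>A(U\<^sub>K)\<close> agreeing with \<open>y\<close> there,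
  and such points approximate \<open>y\<close> in the product topology.
\<close>

section \<open>Norms on a fibre\<close>

lemma
  assumes "norm_on n N" and "v \<in> fiber n"
  shows norm_on_nonneg: "0 \<le> N v"
    and norm_on_eq_0_iff: "N v = 0 \<longleftrightarrow> (\<forall>i. v i = 0)"
    and norm_on_scale: "N (\<lambda>i. c * v i) = cmod c * N v"
    and norm_on_triangle: "w \<in> fiber n \<Longrightarrow> N (\<lambda>i. v i + w i) \<le> N v + N w"
  using assms unfolding norm_on_def by auto

lemma fiber_diff: "v \<in> fiber n \<Longrightarrow> w \<in> fiber n \<Longrightarrow> (\<lambda>i. v i - w i) \<in> fiber n"
  and fiber_scale: "v \<in> fiber n \<Longrightarrow> (\<lambda>i. c * v i) \<in> fiber n"
  by (auto simp: fiber_def)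

definition unit_vector :: "nat \<Rightarrow> nat \<Rightarrow> complex" where
  "unit_vector k = (\<lambda>j. if j = k then 1 else 0)"

lemma unit_vector_in_fiber: "k < n \<Longrightarrow> unit_vector k \<in> fiber n"
  by (auto simp: fiber_def unit_vector_def)

lemma norm_on_le_sum_coords:
  assumes N: "norm_on n N" and u: "u \<in> fiber n"
  shows "N u \<le> (\<Sum>i<n. cmod (u i) * N (unit_vector i))"
proof -
  define trunc where "trunc k = (\<lambda>j. if j < k then u j else 0)" for k
  have "N (trunc k) \<le> (\<Sum>i<k. cmod (u i) * N (unit_vector i))" if "k \<le> n" for k
    using that
  proof (induction k)
    case 0
    have "N (\<lambda>j. 0 * u j) = 0" using norm_on_scale[OF N u, of 0] by simp
    then show ?case by (simp add: trunc_def)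
  next
    case (Suc k)
    have tk: "trunc k \<in> fiber n" using u by (auto simp: fiber_def trunc_def)
    have ek: "unit_vector k \<in> fiber n" using Suc.prems by (simp add: unit_vector_in_fiber)
    have "trunc (Suc k) = (\<lambda>j. trunc k j + u k * unit_vector k j)"
      by (auto simp: trunc_def unit_vector_def less_Suc_eq)
    then have "N (trunc (Suc k)) \<le> N (trunc k) + N (\<lambda>j. u k * unit_vector k j)"
      using norm_on_triangle[OF N tk fiber_scale[OF ek]] by simp
    also have "N (\<lambda>j. u k * unit_vector k j) = cmod (u k) * N (unit_vector k)"
      by (rule norm_on_scale[OF N ek])
    finally show ?case using Suc by simp
  qed
  moreover have "trunc n = u" using u by (auto simp: fiber_def trunc_def)
  ultimately show ?thesis by blast
qed

lemma norm_on_diff_le: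
  assumes N: "norm_on n N" and v: "v \<in> fiber n" and w: "w \<in> fiber n"
  shows "\<bar>N v - N w\<bar> \<le> (\<Sum>i<n. cmod (v i - w i) * N (unit_vector i))"
proof -
  have "N u \<le> N u' + (\<Sum>i<n. cmod (u i - u' i) * N (unit_vector i))"
    if u: "u \<in> fiber n" and u': "u' \<in> fiber n" for u u'
  proof -
    have "N u = N (\<lambda>i. u' i + (u i - u' i))" by simp
    also have "\<dots> \<le> N u' + N (\<lambda>i. u i - u' i)"
      by (rule norm_on_triangle[OF N u' fiber_diff[OF u u']])
    also have "N (\<lambda>i. u i - u' i) \<le> (\<Sum>i<n. cmod (u i - u' i) * N (unit_vector i))"
      using norm_on_le_sum_coords[OF N fiber_diff[OF u u']] by simp
    finally show ?thesis by simp
  qed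
  from this[OF v w] this[OF w v] show ?thesis
    by (simp add: abs_le_iff norm_minus_commute)
qed

lemma continuous_on_norm_on:
  assumes N: "norm_on n N"
  shows "continuous_on (fiber n) N"
  unfolding continuous_on_def
proof
  fix w assume w: "w \<in> fiber n"
  let ?g = "\<lambda>v. \<Sum>i<n. cmod (v i - w i) * N (unit_vector i)"
  have "continuous_on (fiber n) ?g"
    by (intro continuous_intros continuous_on_subset[OF continuous_on_product_coordinates]
        subset_UNIV)
  then have "(?g \<longlongrightarrow> ?g w) (at w within fiber n)"
    using w continuous_on_def by blast
  then have "(?g \<longlongrightarrow> 0) (at w within fiber n)" by simp
  then have "((\<lambda>v. N v - N w) \<longlongrightarrow> 0) (at w within fiber n)"
    by (rule Lim_null_comparison[rotated])
       (auto simp: eventually_at_filter norm_on_diff_le[OF N _ w])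
  then show "(N \<longlongrightarrow> N w) (at w within fiber n)"
    by (simp add: LIM_zero_iff)
qed

lemma compact_fiber_l1_sphere: "compact {v \<in> fiber n. (\<Sum>i<n. cmod (v i)) = 1}"
proof -
  define P where "P = PiE UNIV (\<lambda>i. if i < n then cball (0::complex) 1 else {0})"
  have "compactin (product_topology (\<lambda>i. euclidean) UNIV) P"
    unfolding P_def compactin_PiE by auto
  then have "compact P" by (simp add: euclidean_product_topology)
  moreover have "closed {v::nat\<Rightarrow>complex. (\<Sum>i<n. cmod (v i)) = 1}"
    by (intro closed_Collect_eq continuous_intros continuous_on_product_coordinates)
  moreover have "{v \<in> fiber n. (\<Sum>i<n. cmod (v i)) = 1} = P \<inter> {v. (\<Sum>i<n. cmod (v i)) = 1}"
  proof (intro set_eqI iffI)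
    fix v assume v: "v \<in> {v \<in> fiber n. (\<Sum>i<n. cmod (v i)) = 1}"
    have "cmod (v i) \<le> 1" if "i < n" for i
      using member_le_sum[of i "{..<n}" "\<lambda>i. cmod (v i)"] that v by simp
    then show "v \<in> P \<inter> {v. (\<Sum>i<n. cmod (v i)) = 1}"
      using v by (auto simp: P_def fiber_def PiE_def)
  qed (auto simp: P_def fiber_def PiE_def split: if_splits)
  ultimately show ?thesis by (simp add: compact_Int_closed)
qed

lemma norm_on_bounded_below_on_l1_sphere:
  assumes N: "norm_on n N"
  obtains m where "m > 0" "\<And>v. v \<in> fiber n \<Longrightarrow> (\<Sum>i<n. cmod (v i)) = 1 \<Longrightarrow> m \<le> N v"
proof -
  define S where "S = {v \<in> fiber n. (\<Sum>i<n. cmod (v i)) = 1}"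
  show ?thesis
  proof (cases "S = {}")
    case True
    then show ?thesis using that[of 1] by (auto simp: S_def)
  next
    case False
    have "continuous_on S N"
      by (rule continuous_on_subset[OF continuous_on_norm_on[OF N]]) (auto simp: S_def)
    then obtain v0 where v0: "v0 \<in> S" and min: "\<And>v. v \<in> S \<Longrightarrow> N v0 \<le> N v"
      using continuous_attains_inf[OF compact_fiber_l1_sphere[of n, folded S_def] False] by blast
    have "\<not> (\<forall>i. v0 i = 0)"
    proof
      assume "\<forall>i. v0 i = 0"
      then show False using v0 by (simp add: S_def)
    qed
    moreover have v0_fiber: "v0 \<in> fiber n" using v0 by (simp add: S_def)
    ultimately have "N v0 \<noteq> 0" using norm_on_eq_0_iff[OF N] by blast
    then have "N v0 > 0" using norm_on_nonneg[OF N v0_fiber] by linarith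
    then show ?thesis using min by (intro that) (auto simp: S_def)
  qed
qed

lemma norm_on_dominates_l1:
  assumes N: "norm_on n N"
  obtains c where "c > 0" "\<And>v. v \<in> fiber n \<Longrightarrow> (\<Sum>i<n. cmod (v i)) \<le> c * N v"
proof -
  obtain m where m: "m > 0" and sphere: "\<And>v. v \<in> fiber n \<Longrightarrow> (\<Sum>i<n. cmod (v i)) = 1 \<Longrightarrow> m \<le> N v"
    using norm_on_bounded_below_on_l1_sphere[OF N] by blast
  show ?thesis
  proof (rule that[of "1 / m"])
    fix v assume v: "v \<in> fiber n"
    define s where "s = (\<Sum>i<n. cmod (v i))"
    show "s \<le> 1 / m * N v"
    proof (cases "s = 0")
      case True
      then show ?thesis using norm_on_nonneg[OF N v] m by simp
    next
      case False
      then have s: "s > 0" by (simp add: s_def order_le_neq_trans sum_nonneg)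
      define u where "u = (\<lambda>i. complex_of_real (1/s) * v i)"
      have "cmod (u i) = cmod (v i) / s" for i
        using s by (simp add: u_def norm_mult norm_divide)
      then have "(\<Sum>i<n. cmod (u i)) = 1"
        using s by (simp add: sum_divide_distrib[symmetric] s_def)
      moreover have "u \<in> fiber n" unfolding u_def by (rule fiber_scale[OF v])
      ultimately have "m \<le> N u" by (rule sphere[rotated])
      also have "N u = N v / s"
        unfolding u_def norm_on_scale[OF N v] using s by (simp add: norm_divide)
      finally show ?thesis using s m by (simp add: field_simps)
    qed
  qed (simp add: m)
qed

section \<open>Sections as a complex vector space\<close>

definition sc :: "complex \<Rightarrow> ('x \<Rightarrow> nat \<Rightarrow> complex) \<Rightarrow> ('x \<Rightarrow> nat \<Rightarrow> complex)" where
  "sc c f = (\<lambda>x i. c * f x i)"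

interpretation vs: vector_space sc
  by unfold_locales (auto simp: sc_def fun_eq_iff algebra_simps)

interpretation vsp: vector_space_pair sc "(*) :: complex \<Rightarrow> complex \<Rightarrow> complex"
  by unfold_locales (auto simp: algebra_simps)

lemma plus_fun_eta: "(\<lambda>x i. f x i + g x i) = f + g"
  by (auto simp: fun_eq_iff)

lemma sum_fun_apply: "(sum F J) x = (\<Sum>j\<in>J. F j x)"
  by (induction J rule: infinite_finite_induct) auto

lemma subspace_sections: "vs.subspace (sections d)"
  by (auto simp: vs.subspace_def sections_def fiber_def sc_def)

lemmas sections_0 = vs.subspace_0[OF subspace_sections]
  and sections_add = vs.subspace_add[OF subspace_sections]
  and sections_diff = vs.subspace_diff[OF subspace_sections]
  and sections_scale = vs.subspace_scale[OF subspace_sections]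
  and sections_sum = vs.subspace_sum[OF subspace_sections]

definition restr :: "'x set \<Rightarrow> ('x \<Rightarrow> nat \<Rightarrow> complex) \<Rightarrow> ('x \<Rightarrow> nat \<Rightarrow> complex)" where
  "restr L f = (\<lambda>x. if x \<in> L then f x else 0)"

definition single :: "'x \<Rightarrow> (nat \<Rightarrow> complex) \<Rightarrow> ('x \<Rightarrow> nat \<Rightarrow> complex)" where
  "single x v = (\<lambda>y. if y = x then v else 0)"

lemma restr_add: "restr L (f + g) = restr L f + restr L g"
  and restr_scale: "restr L (sc c f) = sc c (restr L f)"
  and restr_sum: "restr L (sum F J) = (\<Sum>j\<in>J. restr L (F j))"
  and restr_zero: "restr L 0 = 0"
  by (auto simp: restr_def sc_def fun_eq_iff sum_fun_apply)

lemma restr_eq_0_iff: "restr L f = 0 \<longleftrightarrow> (\<forall>x\<in>L. f x = 0)"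
  by (auto simp: restr_def fun_eq_iff)

lemma restr_eq_iff: "restr L f = restr L g \<longleftrightarrow> (\<forall>x\<in>L. f x = g x)"
  by (auto simp: restr_def fun_eq_iff)

lemma single_add: "single x (\<lambda>i. v i + w i) = single x v + single x w"
  and single_scale: "single x (\<lambda>i. c * v i) = sc c (single x v)"
  by (auto simp: single_def sc_def fun_eq_iff)

lemma sum_single: "finite L \<Longrightarrow> (\<Sum>x\<in>L. single x (g x)) = restr L g"
  by (auto simp: fun_eq_iff sum_fun_apply single_def restr_def if_distrib sum.delta cong: if_cong)

lemma restr_eq_sum_coords:
  assumes "f \<in> sections d" "finite L"
  shows "restr L f = (\<Sum>(x, i)\<in>(SIGMA x:L. {..<d x}). sc (f x i) (single x (unit_vector i)))"
proof -
  have "single x (f x) = (\<Sum>i<d x. sc (f x i) (single x (unit_vector i)))" for x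
  proof (intro ext)
    fix y j
    have "f x j = (\<Sum>i<d x. f x i * unit_vector i j)"
      using assms(1)
      by (auto simp: sections_def fiber_def unit_vector_def if_distrib sum.delta cong: if_cong)
    then show "single x (f x) y j = (\<Sum>i<d x. sc (f x i) (single x (unit_vector i))) y j"
      by (simp add: sum_fun_apply single_def sc_def)
  qed
  with sum_single[OF assms(2), of f] show ?thesis
    by (simp add: sum.Sigma[OF assms(2)])
qed

lemma
  assumes A: "linear_on_sections d A" and f: "f \<in> sections d"
  shows linear_on_sections_in_sections: "A f \<in> sections d"
    and linear_on_sections_add: "g \<in> sections d \<Longrightarrow> A (f + g) = A f + A g"
    and linear_on_sections_scale: "A (sc c f) = sc c (A f)"
  using assms unfolding linear_on_sections_def plus_fun_eta[symmetric] sc_def by auto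

lemma linear_on_sections_diff:
  assumes A: "linear_on_sections d A" and f: "f \<in> sections d" and g: "g \<in> sections d"
  shows "A (f - g) = A f - A g"
  using linear_on_sections_add[OF A sections_diff[OF f g] g] by (simp add: algebra_simps)

lemma linear_on_sections_0: "linear_on_sections d A \<Longrightarrow> A 0 = 0"
  using linear_on_sections_diff[OF _ sections_0 sections_0] by simp

lemma linear_on_sections_sum:
  assumes A: "linear_on_sections d A" and F: "\<And>j. j \<in> J \<Longrightarrow> F j \<in> sections d"
  shows "A (sum F J) = (\<Sum>j\<in>J. A (F j))"
  using F
proof (induction J rule: infinite_finite_induct)
  case (insert j J)
  have IH: "A (sum F J) = (\<Sum>j\<in>J. A (F j))" using insert.IH insert.prems by blast
  have "A (sum F (insert j J)) = A (F j + sum F J)" by (simp only: sum.insert[OF insert.hyps])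
  also have "\<dots> = A (F j) + A (sum F J)"
    using insert.prems sections_sum[of J F d] by (intro linear_on_sections_add[OF A]) auto
  also have "\<dots> = (\<Sum>j\<in>insert j J. A (F j))" by (simp only: IH sum.insert[OF insert.hyps])
  finally show ?case .
qed (simp_all add: linear_on_sections_0[OF A])

lemma
  assumes norms: "\<forall>x. norm_on (d x) (N x)" and f: "f \<in> sections d"
  shows pK_nonneg: "0 \<le> pK N K f"
    and pK_scale: "pK N K (sc c f) = cmod c * pK N K f"
    and pK_add: "g \<in> sections d \<Longrightarrow> pK N K (f + g) \<le> pK N K f + pK N K g"
proof -
  have Nx: "norm_on (d x) (N x)" and fx: "f x \<in> fiber (d x)" for x
    using norms f by (auto simp: sections_def)
  show "0 \<le> pK N K f"
    unfolding pK_def by (intro sum_nonneg norm_on_nonneg[OF Nx fx])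
  show "pK N K (sc c f) = cmod c * pK N K f"
    unfolding pK_def sc_def sum_distrib_left by (intro sum.cong refl norm_on_scale[OF Nx fx])
  show "pK N K (f + g) \<le> pK N K f + pK N K g" if "g \<in> sections d"
    unfolding pK_def sum.distrib[symmetric] plus_fun_eta[symmetric]
    using that by (intro sum_mono norm_on_triangle[OF Nx fx]) (simp add: sections_def)
qed

lemma pK_0: "\<forall>x. norm_on (d x) (N x) \<Longrightarrow> pK N K 0 = 0"
  unfolding pK_def by (intro sum.neutral) (simp add: norm_on_def fiber_def)

lemma pK_sum:
  assumes norms: "\<forall>x. norm_on (d x) (N x)" and F: "\<And>j. j \<in> J \<Longrightarrow> F j \<in> sections d"
  shows "pK N K (sum F J) \<le> (\<Sum>j\<in>J. pK N K (F j))"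
  using F
proof (induction J rule: infinite_finite_induct)
  case (insert j J)
  have IH: "pK N K (sum F J) \<le> (\<Sum>j\<in>J. pK N K (F j))" using insert.IH insert.prems by blast
  have "pK N K (sum F (insert j J)) = pK N K (F j + sum F J)"
    by (simp only: sum.insert[OF insert.hyps])
  also have "\<dots> \<le> pK N K (F j) + pK N K (sum F J)"
    using insert.prems sections_sum[of J F d] by (intro pK_add[OF norms]) auto
  also have "\<dots> \<le> (\<Sum>j\<in>insert j J. pK N K (F j))" using IH insert.hyps by simp
  finally show ?case .
qed (simp_all add: pK_0[OF norms])

lemma linear_on_sections_lincomb:
  assumes lin: "linear_on_sections d A" and F: "\<And>j. j \<in> J \<Longrightarrow> F j \<in> sections d"
  shows "A (\<Sum>j\<in>J. sc (a j) (F j)) = (\<Sum>j\<in>J. sc (a j) (A (F j)))"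
proof -
  have "A (\<Sum>j\<in>J. sc (a j) (F j)) = (\<Sum>j\<in>J. A (sc (a j) (F j)))"
    using F by (intro linear_on_sections_sum[OF lin] sections_scale)
  also have "\<dots> = (\<Sum>j\<in>J. sc (a j) (A (F j)))"
    using F by (intro sum.cong refl linear_on_sections_scale[OF lin])
  finally show ?thesis .
qed

lemma pK_lincomb_le:
  assumes norms: "\<forall>x. norm_on (d x) (N x)" and F: "\<And>j. j \<in> J \<Longrightarrow> F j \<in> sections d"
  shows "pK N K (\<Sum>j\<in>J. sc (a j) (F j)) \<le> (\<Sum>j\<in>J. cmod (a j) * pK N K (F j))"
proof -
  have "pK N K (\<Sum>j\<in>J. sc (a j) (F j)) \<le> (\<Sum>j\<in>J. pK N K (sc (a j) (F j)))"
    using F by (intro pK_sum[OF norms] sections_scale)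
  also have "\<dots> = (\<Sum>j\<in>J. cmod (a j) * pK N K (F j))"
    using F by (intro sum.cong refl pK_scale[OF norms])
  finally show ?thesis .
qed

lemma pK_cong: "(\<And>x. x \<in> K \<Longrightarrow> f x = g x) \<Longrightarrow> pK N K f = pK N K g"
  unfolding pK_def by auto

lemma N_le_pK:
  assumes norms: "\<forall>x. norm_on (d x) (N x)" and f: "f \<in> sections d"
    and "finite K" "x \<in> K"
  shows "N x (f x) \<le> pK N K f"
  unfolding pK_def using assms
  by (intro member_le_sum norm_on_nonneg) (auto simp: sections_def)

section \<open>The product topology\<close>

definition seminorm_balls :: "('x \<Rightarrow> nat) \<Rightarrow> ('x \<Rightarrow> (nat \<Rightarrow> complex) \<Rightarrow> real)
    \<Rightarrow> ('x \<Rightarrow> nat \<Rightarrow> complex) set set" where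
  "seminorm_balls d N = {{g \<in> sections d. pK N K (\<lambda>x i. g x i - f x i) < r} | f K r.
     f \<in> sections d \<and> finite K \<and> r > 0}"

lemma gamma_top_eq:
  "gamma_top d N = subtopology (topology_generated_by (seminorm_balls d N)) (sections d)"
  by (simp add: gamma_top_def seminorm_balls_def)

lemma topspace_gamma_top: "topspace (gamma_top d N) = sections d"
proof -
  have "y \<in> \<Union>(seminorm_balls d N)" if "y \<in> sections d" for y
  proof
    show "{g \<in> sections d. pK N {} (\<lambda>x i. g x i - y x i) < 1} \<in> seminorm_balls d N"
      unfolding seminorm_balls_def
      by (rule CollectI, intro exI[of _ y] exI[of _ "{}"] exI[of _ 1]) (simp add: that)
  qed (use that in \<open>simp add: pK_def\<close>)
  moreover have "\<Union>(seminorm_balls d N) \<subseteq> sections d" unfolding seminorm_balls_def by auto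
  ultimately show ?thesis
    unfolding gamma_top_eq by auto
qed

lemma generate_topology_on_seminorm_balls_cylinder:
  assumes "generate_topology_on (seminorm_balls d N) U"
  shows "\<forall>y\<in>U. \<exists>M. finite M \<and> (\<forall>h\<in>sections d. (\<forall>x\<in>M. h x = y x) \<longrightarrow> h \<in> U)"
  using assms
proof (induction rule: generate_topology_on.induct)
  case (Int U V)
  show ?case
  proof
    fix y assume y: "y \<in> U \<inter> V"
    obtain M1 where "finite M1" "\<forall>h\<in>sections d. (\<forall>x\<in>M1. h x = y x) \<longrightarrow> h \<in> U"
      using Int.IH(1) y by blast
    moreover obtain M2 where "finite M2" "\<forall>h\<in>sections d. (\<forall>x\<in>M2. h x = y x) \<longrightarrow> h \<in> V"
      using Int.IH(2) y by blast
    ultimately show "\<exists>M. finite M \<and> (\<forall>h\<in>sections d. (\<forall>x\<in>M. h x = y x) \<longrightarrow> h \<in> U \<inter> V)"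
      by (intro exI[of _ "M1 \<union> M2"]) auto
  qed
next
  case (UN \<U>)
  show ?case
  proof
    fix y assume "y \<in> \<Union>\<U>"
    then obtain U where U: "U \<in> \<U>" "y \<in> U" by blast
    then obtain M where "finite M" "\<forall>h\<in>sections d. (\<forall>x\<in>M. h x = y x) \<longrightarrow> h \<in> U"
      using UN.IH by blast
    with U show "\<exists>M. finite M \<and> (\<forall>h\<in>sections d. (\<forall>x\<in>M. h x = y x) \<longrightarrow> h \<in> \<Union>\<U>)"
      by blast
  qed
next
  case (Basis U)
  then obtain f K r where U: "U = {g \<in> sections d. pK N K (\<lambda>x i. g x i - f x i) < r}" "finite K"
    unfolding seminorm_balls_def by blast
  show ?case
  proof
    fix y assume y: "y \<in> U"
    show "\<exists>M. finite M \<and> (\<forall>h\<in>sections d. (\<forall>x\<in>M. h x = y x) \<longrightarrow> h \<in> U)"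
    proof (intro exI[of _ K] conjI ballI impI)
      fix h assume h: "h \<in> sections d" "\<forall>x\<in>K. h x = y x"
      have "pK N K (\<lambda>x i. h x i - f x i) = pK N K (\<lambda>x i. y x i - f x i)"
        by (rule pK_cong) (use h in auto)
      then show "h \<in> U" using y h unfolding U by auto
    qed (fact U(2))
  qed
qed simp

lemma openin_gamma_top_cylinder:
  assumes "openin (gamma_top d N) T" "y \<in> T"
  obtains M where "finite M" "\<And>h. h \<in> sections d \<Longrightarrow> (\<forall>x\<in>M. h x = y x) \<Longrightarrow> h \<in> T"
proof -
  obtain T' where T': "generate_topology_on (seminorm_balls d N) T'" "T = T' \<inter> sections d"
    using assms(1) unfolding gamma_top_eq openin_subtopology
    by (auto simp: openin_topology_generated_by_iff)
  from generate_topology_on_seminorm_balls_cylinder[OF T'(1)] assms(2) T'(2) obtain M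
    where "finite M" "\<forall>h\<in>sections d. (\<forall>x\<in>M. h x = y x) \<longrightarrow> h \<in> T'"
    by blast
  with that T'(2) show ?thesis by blast
qed

lemma in_closure_of_gamma_topI:
  assumes "y \<in> sections d"
    and "\<And>M. finite M \<Longrightarrow> \<exists>s\<in>S. s \<in> sections d \<and> (\<forall>x\<in>M. s x = y x)"
  shows "y \<in> gamma_top d N closure_of S"
  unfolding in_closure_of topspace_gamma_top
proof (intro conjI allI impI)
  fix T assume "y \<in> T \<and> openin (gamma_top d N) T"
  then obtain M where "finite M" "\<And>h. h \<in> sections d \<Longrightarrow> (\<forall>x\<in>M. h x = y x) \<Longrightarrow> h \<in> T"
    using openin_gamma_top_cylinder by metis
  then show "\<exists>s. s \<in> S \<and> s \<in> T" using assms(2) by metis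
qed (fact assms(1))

section \<open>Finite restrictions of the range\<close>

lemma (in vector_space) separating_linear_functional:
  assumes W: "subspace W" and v: "v \<notin> W"
  obtains \<psi> where "Vector_Spaces.linear scale (*) \<psi>" "\<psi> v = 1" "\<And>w. w \<in> W \<Longrightarrow> \<psi> w = 0"
proof -
  interpret vf: vector_space_pair scale "(*) :: 'a \<Rightarrow> 'a \<Rightarrow> 'a"
    by unfold_locales (auto simp: algebra_simps)
  obtain B where B: "B \<subseteq> W" "independent B" "W \<subseteq> span B"
    by (rule basis_exists)
  have span_B: "span B = W" by (rule span_subspace[OF B(1,3) W])
  with v have "v \<notin> span B" by simp
  then have indep: "independent (insert v B)" by (rule independent_insertI[OF _ B(2)])
  define \<psi> where "\<psi> = vf.construct (insert v B) (\<lambda>b. if b = v then 1 else 0)"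
  have lin: "Vector_Spaces.linear scale (*) \<psi>"
    unfolding \<psi>_def by (rule vf.linear_construct[OF indep])
  show ?thesis
  proof (rule that[OF lin])
    show "\<psi> v = 1" unfolding \<psi>_def by (simp add: vf.construct_basis[OF indep])
    have "\<psi> b = 0" if "b \<in> B" for b
      using that B(1) v unfolding \<psi>_def by (auto simp: vf.construct_basis[OF indep])
    then show "\<psi> w = 0" if "w \<in> W" for w
      using vf.linear_eq_0_on_span[OF lin] that span_B by blast
  qed
qed

definition dual_section_of :: "'x set \<Rightarrow> (('x \<Rightarrow> nat \<Rightarrow> complex) \<Rightarrow> complex)
    \<Rightarrow> 'x \<Rightarrow> (nat \<Rightarrow> complex) \<Rightarrow> complex" where
  "dual_section_of L \<psi> = (\<lambda>x w. if x \<in> L then \<psi> (single x w) else 0)"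

lemma
  assumes \<psi>: "Vector_Spaces.linear sc (*) \<psi>" and L: "finite L"
  shows dual_section_of_in_dual_sections: "dual_section_of L \<psi> \<in> dual_sections d"
    and pairing_dual_section_of:
      "g \<in> sections d \<Longrightarrow> pairing d (dual_section_of L \<psi>) g = \<psi> (restr L g)"
proof -
  let ?\<phi> = "dual_section_of L \<psi>"
  have supp: "dual_support d ?\<phi> \<subseteq> L"
    unfolding dual_support_def dual_section_of_def by auto
  then show "?\<phi> \<in> dual_sections d"
    unfolding dual_sections_def using finite_subset[OF supp L]
    by (auto simp: dual_section_of_def single_add single_scale
        vsp.linear_add[OF \<psi>] vsp.linear_scale[OF \<psi>])
  assume g: "g \<in> sections d"
  have "pairing d ?\<phi> g = (\<Sum>x\<in>L. ?\<phi> x (g x))"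
    unfolding pairing_def using g
    by (intro sum.mono_neutral_left[OF L supp]) (auto simp: dual_support_def sections_def)
  also have "\<dots> = \<psi> (\<Sum>x\<in>L. single x (g x))"
    by (simp add: dual_section_of_def vsp.linear_sum[OF \<psi>])
  also have "\<dots> = \<psi> (restr L g)" by (simp add: sum_single[OF L])
  finally show "pairing d ?\<phi> g = \<psi> (restr L g)" .
qed

lemma pairing_cong:
  assumes "\<And>x w. w \<in> fiber (d x) \<Longrightarrow> \<phi> x w = \<phi>' x w" and "g \<in> sections d"
  shows "pairing d \<phi> g = pairing d \<phi>' g"
proof -
  have "dual_support d \<phi> = dual_support d \<phi>'"
    using assms(1) by (auto simp: dual_support_def)
  then show ?thesis
    using assms by (auto simp: pairing_def sections_def intro!: sum.cong)
qed

lemma (in vector_space) subspace_image_linear_on: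
  assumes S: "subspace S"
    and add: "\<And>x y. x \<in> S \<Longrightarrow> y \<in> S \<Longrightarrow> h (x + y) = h x + h y"
    and scale: "\<And>c x. x \<in> S \<Longrightarrow> h (scale c x) = scale c (h x)"
  shows "subspace (h ` S)"
  unfolding subspace_def
proof (intro conjI ballI allI)
  have "h 0 = h 0 + h 0" using add[of 0 0] subspace_0[OF S] by simp
  then have "0 = h 0" by simp
  then show "0 \<in> h ` S" using subspace_0[OF S] by (rule image_eqI)
  show "x + y \<in> h ` S" if "x \<in> h ` S" "y \<in> h ` S" for x y
    using that by (auto simp: add[symmetric] intro!: imageI subspace_add[OF S])
  show "scale c x \<in> h ` S" if "x \<in> h ` S" for c x
    using that by (auto simp: scale[symmetric] intro!: imageI subspace_scale[OF S])
qed

lemma restr_range_of_dual_op_injective: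
  assumes lin: "linear_on_sections d A" and inj: "dual_op_injective d A"
    and L: "finite L" and u: "u \<in> sections d"
  obtains f where "f \<in> sections d" "restr L (A f) = restr L u"
proof -
  define W where "W = (\<lambda>f. restr L (A f)) ` sections d"
  have "vs.subspace W"
    unfolding W_def using subspace_sections
    by (rule vs.subspace_image_linear_on)
       (simp_all add: linear_on_sections_add[OF lin] linear_on_sections_scale[OF lin]
          restr_add restr_scale)
  have "restr L u \<in> W"
  proof (rule ccontr)
    assume "restr L u \<notin> W"
    then obtain \<psi> where \<psi>: "Vector_Spaces.linear sc (*) \<psi>" "\<psi> (restr L u) = 1"
      and \<psi>_W: "\<And>w. w \<in> W \<Longrightarrow> \<psi> w = 0"
      using vs.separating_linear_functional \<open>vs.subspace W\<close> by metis
    have zero: "Vector_Spaces.linear sc (*) (\<lambda>_. 0)" by (rule vsp.linear_zero)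
    have "pairing d (dual_section_of L \<psi>) (A f) = pairing d (dual_section_of L (\<lambda>_. 0)) (A f)"
      if "f \<in> sections d" for f
      using that \<psi>_W linear_on_sections_in_sections[OF lin]
      by (simp add: pairing_dual_section_of[OF \<psi>(1) L] pairing_dual_section_of[OF zero L] W_def)
    then have "\<forall>x. \<forall>w\<in>fiber (d x). dual_section_of L \<psi> x w = dual_section_of L (\<lambda>_. 0) x w"
      using inj dual_section_of_in_dual_sections[OF \<psi>(1) L]
        dual_section_of_in_dual_sections[OF zero L]
      unfolding dual_op_injective_def by blast
    then have "pairing d (dual_section_of L \<psi>) u = pairing d (dual_section_of L (\<lambda>_. 0)) u"
      using u by (intro pairing_cong) auto
    then show False
      using u \<psi>(2)
      by (simp add: pairing_dual_section_of[OF \<psi>(1) L] pairing_dual_section_of[OF zero L])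
  qed
  then obtain f where "f \<in> sections d" "restr L u = restr L (A f)"
    unfolding W_def by blast
  with that show ?thesis by simp
qed

section \<open>Stabilisation\<close>

lemma (in vector_space) subspace_eq_of_dim_le:
  assumes S: "subspace S" and T: "subspace T" and "S \<subseteq> T"
    and T_span: "T \<subseteq> span G" and G: "finite G" and dim: "dim T \<le> dim S"
  shows "S = T"
proof (rule ccontr)
  assume "S \<noteq> T"
  with \<open>S \<subseteq> T\<close> obtain t where t: "t \<in> T" "t \<notin> S" by blast
  obtain B where B: "B \<subseteq> S" "independent B" "S \<subseteq> span B" "card B = dim S"
    by (rule basis_exists)
  obtain C where C: "C \<subseteq> T" "independent C" "T \<subseteq> span C" "card C = dim T"
    by (rule basis_exists)
  have "span B = S" by (rule span_subspace[OF B(1,3) S])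
  with t have "t \<notin> span B" by simp
  then have indep: "independent (insert t B)" and "t \<notin> B"
    using independent_insertI[OF _ B(2)] span_base by auto
  have "finite B" "finite C"
    using independent_span_bound[OF G] B C \<open>S \<subseteq> T\<close> T_span by (meson order_trans)+
  have "insert t B \<subseteq> span C" using t B(1) C(3) \<open>S \<subseteq> T\<close> by auto
  then have "card (insert t B) \<le> card C"
    using independent_span_bound[OF \<open>finite C\<close> indep] by simp
  with \<open>t \<notin> B\<close> \<open>finite B\<close> B(4) C(4) dim show False by simp
qed

definition kernel_trace :: "('x \<Rightarrow> nat) \<Rightarrow> (('x \<Rightarrow> nat \<Rightarrow> complex) \<Rightarrow> ('x \<Rightarrow> nat \<Rightarrow> complex))
    \<Rightarrow> 'x set \<Rightarrow> 'x set \<Rightarrow> ('x \<Rightarrow> nat \<Rightarrow> complex) set" where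
  "kernel_trace d A K L = restr K ` {f \<in> sections d. restr L (A f) = 0}"

lemma subspace_kernel_trace:
  assumes lin: "linear_on_sections d A"
  shows "vs.subspace (kernel_trace d A K L)"
proof -
  have "vs.subspace {f \<in> sections d. restr L (A f) = 0}"
    unfolding vs.subspace_def
    by (simp add: sections_0 sections_add sections_scale restr_zero restr_add restr_scale
        linear_on_sections_0[OF lin] linear_on_sections_add[OF lin]
        linear_on_sections_scale[OF lin])
  then show ?thesis
    unfolding kernel_trace_def
    by (rule vs.subspace_image_linear_on) (simp_all add: restr_add restr_scale)
qed

lemma kernel_trace_antimono: "L \<subseteq> L' \<Longrightarrow> kernel_trace d A K L' \<subseteq> kernel_trace d A K L"
  unfolding kernel_trace_def by (auto simp: restr_eq_0_iff)

lemma restr_sections_subset_finite_span: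
  assumes "finite K"
  obtains G where "finite G" "restr K ` sections d \<subseteq> vs.span G"
proof
  let ?G = "(\<lambda>(x, i). single x (unit_vector i)) ` (SIGMA x:K. {..<d x})"
  show "finite ?G" using assms by auto
  show "restr K ` sections d \<subseteq> vs.span ?G"
  proof
    fix v assume "v \<in> restr K ` sections d"
    then obtain f where "f \<in> sections d" "v = restr K f" by blast
    then have "v = (\<Sum>(x, i)\<in>(SIGMA x:K. {..<d x}). sc (f x i) (single x (unit_vector i)))"
      using restr_eq_sum_coords[OF _ assms] by simp
    also have "\<dots> \<in> vs.span ?G"
      by (intro vs.span_sum) (force intro: vs.span_scale vs.span_base)
    finally show "v \<in> vs.span ?G" .
  qed
qed

lemma kernel_trace_eventually_constant:
  assumes lin: "linear_on_sections d A" and K: "finite K"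
  obtains L0 where "finite L0" "K \<subseteq> L0"
    "\<And>L. finite L \<Longrightarrow> L0 \<subseteq> L \<Longrightarrow> kernel_trace d A K L = kernel_trace d A K L0"
proof -
  obtain L0 where L0: "finite L0" "K \<subseteq> L0"
    and min: "\<And>L. finite L \<and> K \<subseteq> L \<Longrightarrow> vs.dim (kernel_trace d A K L0) \<le> vs.dim (kernel_trace d A K L)"
    using ex_has_least_nat[of "\<lambda>L. finite L \<and> K \<subseteq> L" K "\<lambda>L. vs.dim (kernel_trace d A K L)"] K
    by blast
  obtain G where G: "finite G" "restr K ` sections d \<subseteq> vs.span G"
    using restr_sections_subset_finite_span[OF K] by blast
  show ?thesis
  proof (rule that[OF L0])
    fix L assume "finite L" "L0 \<subseteq> L"
    with L0 G show "kernel_trace d A K L = kernel_trace d A K L0"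
      by (intro vs.subspace_eq_of_dim_le subspace_kernel_trace[OF lin] kernel_trace_antimono min)
         (auto simp: kernel_trace_def)
  qed
qed

lemma exists_correction_vanishing_on:
  assumes lin: "linear_on_sections d A" and inj: "dual_op_injective d A" and K: "finite K"
  obtains L0 where "finite L0" "K \<subseteq> L0"
    and "\<And>L u. finite L \<Longrightarrow> L0 \<subseteq> L \<Longrightarrow> u \<in> sections d \<Longrightarrow> \<forall>x\<in>L0. u x = 0 \<Longrightarrow>
           \<exists>z\<in>sections d. (\<forall>x\<in>K. z x = 0) \<and> (\<forall>x\<in>L. A z x = u x)"
proof -
  obtain L0 where L0: "finite L0" "K \<subseteq> L0"
    and trace_eq: "\<And>L. finite L \<Longrightarrow> L0 \<subseteq> L \<Longrightarrow> kernel_trace d A K L = kernel_trace d A K L0"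
    using kernel_trace_eventually_constant[OF lin K] by metis
  show ?thesis
  proof (rule that[OF L0])
    fix L u assume L: "finite L" "L0 \<subseteq> L" and u: "u \<in> sections d" "\<forall>x\<in>L0. u x = 0"
    obtain f where f: "f \<in> sections d" "restr L (A f) = restr L u"
      using restr_range_of_dual_op_injective[OF lin inj L(1) u(1)] .
    have "restr L0 (A f) = 0"
      using f(2) u(2) L(2) by (auto simp: restr_eq_iff restr_eq_0_iff)
    with f(1) have "restr K f \<in> kernel_trace d A K L0"
      unfolding kernel_trace_def by (intro image_eqI[of _ _ f]) simp_all
    then have "restr K f \<in> kernel_trace d A K L" using trace_eq[OF L] by simp
    then obtain g where g: "g \<in> sections d" "restr L (A g) = 0" "restr K f = restr K g"
      unfolding kernel_trace_def by auto
    show "\<exists>z\<in>sections d. (\<forall>x\<in>K. z x = 0) \<and> (\<forall>x\<in>L. A z x = u x)"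
    proof (intro bexI conjI)
      show "f - g \<in> sections d" using f(1) g(1) by (rule sections_diff)
      show "\<forall>x\<in>K. (f - g) x = 0" using g(3) by (simp add: restr_eq_iff)
      show "\<forall>x\<in>L. A (f - g) x = u x"
        using f g linear_on_sections_diff[OF lin f(1) g(1)]
        by (simp add: restr_eq_iff restr_eq_0_iff)
    qed
  qed
qed

section \<open>Controlled approximate solutions\<close>

lemma coords_le_pK:
  assumes norms: "\<forall>x. norm_on (d x) (N x)" and L: "finite L"
  obtains c where "c \<ge> 0" "\<And>y x i. y \<in> sections d \<Longrightarrow> x \<in> L \<Longrightarrow> cmod (y x i) \<le> c * pK N L y"
proof -
  have "\<forall>x. \<exists>c>0. \<forall>v\<in>fiber (d x). (\<Sum>i<d x. cmod (v i)) \<le> c * N x v"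
    by (intro allI, rule norm_on_dominates_l1[OF norms[rule_format]]) blast
  then obtain cx
    where "\<forall>x. cx x > 0 \<and> (\<forall>v\<in>fiber (d x). (\<Sum>i<d x. cmod (v i)) \<le> cx x * N x v)"
    unfolding choice_iff by blast
  then have cx: "\<And>x. cx x > 0"
    and l1: "\<And>x v. v \<in> fiber (d x) \<Longrightarrow> (\<Sum>i<d x. cmod (v i)) \<le> cx x * N x v"
    by auto
  show ?thesis
  proof (rule that[of "\<Sum>x\<in>L. cx x"])
    show "0 \<le> (\<Sum>x\<in>L. cx x)" using cx by (simp add: sum_nonneg less_imp_le)
    fix y x i assume y: "y \<in> sections d" and x: "x \<in> L"
    have yx: "y x \<in> fiber (d x)" using y by (simp add: sections_def)
    have "cmod (y x i) \<le> (\<Sum>i<d x. cmod (y x i))"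
      using yx by (cases "i < d x") (auto simp: fiber_def intro: member_le_sum sum_nonneg)
    also have "\<dots> \<le> cx x * N x (y x)" by (rule l1[OF yx])
    also have "\<dots> \<le> (\<Sum>x\<in>L. cx x) * pK N L y"
      using cx x L norm_on_nonneg[OF norms[rule_format] yx] N_le_pK[OF norms y L x]
      by (intro mult_mono member_le_sum) (auto simp: less_imp_le intro: sum_nonneg)
    finally show "cmod (y x i) \<le> (\<Sum>x\<in>L. cx x) * pK N L y" .
  qed
qed

lemma unit_section_preimages:
  assumes lin: "linear_on_sections d A" and inj: "dual_op_injective d A" and L: "finite L"
  obtains pre where "\<And>p. p \<in> (SIGMA x:L. {..<d x}) \<Longrightarrow> pre p \<in> sections d"
    "\<And>p. p \<in> (SIGMA x:L. {..<d x}) \<Longrightarrow> restr L (A (pre p)) = single (fst p) (unit_vector (snd p))"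
proof -
  have "\<forall>p\<in>(SIGMA x:L. {..<d x}).
          \<exists>f. f \<in> sections d \<and> restr L (A f) = single (fst p) (unit_vector (snd p))"
  proof
    fix p assume p: "p \<in> (SIGMA x:L. {..<d x})"
    have "single (fst p) (unit_vector (snd p)) \<in> sections d"
      using p by (auto simp: sections_def single_def fiber_def unit_vector_def)
    moreover have
      "restr L (single (fst p) (unit_vector (snd p))) = single (fst p) (unit_vector (snd p))"
      using p by (auto simp: restr_def single_def fun_eq_iff)
    ultimately show "\<exists>f. f \<in> sections d \<and> restr L (A f) = single (fst p) (unit_vector (snd p))"
      using restr_range_of_dual_op_injective[OF lin inj L] by metis
  qed
  then obtain pre where "\<forall>p\<in>(SIGMA x:L. {..<d x}).
      pre p \<in> sections d \<and> restr L (A (pre p)) = single (fst p) (unit_vector (snd p))"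
    by (rule bchoice[THEN exE])
  then have "pre p \<in> sections d" "restr L (A (pre p)) = single (fst p) (unit_vector (snd p))"
    if "p \<in> (SIGMA x:L. {..<d x})" for p
    using that by blast+
  then show ?thesis by (rule that)
qed

lemma bounded_lift_on_finite:
  assumes norms: "\<forall>x. norm_on (d x) (N x)" and lin: "linear_on_sections d A"
    and inj: "dual_op_injective d A" and L: "finite L"
  obtains C where "C \<ge> 0"
    "\<And>y. y \<in> sections d \<Longrightarrow> \<exists>f\<in>sections d. restr L (A f) = restr L y \<and> pK N K f \<le> C * pK N L y"
proof -
  let ?I = "SIGMA x:L. {..<d x}"
  obtain pre where pre: "\<And>p. p \<in> ?I \<Longrightarrow> pre p \<in> sections d"
    and A_pre: "\<And>p. p \<in> ?I \<Longrightarrow> restr L (A (pre p)) = single (fst p) (unit_vector (snd p))"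
    using unit_section_preimages[OF lin inj L] by metis
  obtain c where c: "c \<ge> 0" "\<And>y x i. y \<in> sections d \<Longrightarrow> x \<in> L \<Longrightarrow> cmod (y x i) \<le> c * pK N L y"
    using coords_le_pK[OF norms L] by blast
  define C where "C = c * (\<Sum>p\<in>?I. pK N K (pre p))"
  show ?thesis
  proof (rule that)
    show "C \<ge> 0"
      unfolding C_def using c(1) pre pK_nonneg[OF norms]
      by (intro mult_nonneg_nonneg sum_nonneg) auto
    fix y assume y: "y \<in> sections d"
    define f where "f = (\<Sum>(x, i)\<in>?I. sc (y x i) (pre (x, i)))"
    have f: "f \<in> sections d"
      unfolding f_def using pre by (intro sections_sum) (auto intro: sections_scale)
    have "restr L (A f) = (\<Sum>(x, i)\<in>?I. sc (y x i) (restr L (A (pre (x, i)))))"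
      unfolding f_def
      by (simp add: split_def linear_on_sections_lincomb[OF lin pre] restr_sum restr_scale)
    also have "\<dots> = restr L y"
      unfolding restr_eq_sum_coords[OF y L] by (intro sum.cong refl) (auto simp: A_pre)
    finally have "restr L (A f) = restr L y" .
    moreover have "pK N K f \<le> C * pK N L y"
    proof -
      have "pK N K f \<le> (\<Sum>(x, i)\<in>?I. cmod (y x i) * pK N K (pre (x, i)))"
        unfolding f_def split_def using pK_lincomb_le[OF norms pre] by simp
      also have "\<dots> \<le> (\<Sum>p\<in>?I. c * pK N L y * pK N K (pre p))"
        using pre c(2)[OF y] pK_nonneg[OF norms]
        by (intro sum_mono) (auto intro!: mult_right_mono)
      also have "\<dots> = C * pK N L y"
        by (simp add: C_def sum_distrib_left mult_ac)
      finally show ?thesis .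
    qed
    ultimately show "\<exists>f\<in>sections d. restr L (A f) = restr L y \<and> pK N K f \<le> C * pK N L y"
      using f by blast
  qed
qed

lemma controlled_local_solutions:
  fixes K :: "'x set"
  assumes norms: "\<forall>x. norm_on (d x) (N x)" and lin: "linear_on_sections d A"
    and inj: "dual_op_injective d A" and K: "finite K"
  obtains L0 C where "finite L0" "K \<subseteq> L0" "C \<ge> 0"
    "\<And>y M. y \<in> sections d \<Longrightarrow> finite M \<Longrightarrow>
       \<exists>f\<in>sections d. (\<forall>x\<in>M. A f x = y x) \<and> pK N K f \<le> C * pK N L0 y"
proof -
  obtain L0 where L0: "finite L0" "K \<subseteq> L0" and stable: "\<And>L u. finite L \<Longrightarrow> L0 \<subseteq> L \<Longrightarrow>
      u \<in> sections d \<Longrightarrow> \<forall>x\<in>L0. u x = 0 \<Longrightarrow> \<exists>z\<in>sections d. (\<forall>x\<in>K. z x = 0) \<and> (\<forall>x\<in>L. A z x = u x)"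
    using exists_correction_vanishing_on[OF lin inj K] by metis
  obtain C where C: "C \<ge> 0" and lift: "\<And>y. y \<in> sections d \<Longrightarrow>
      \<exists>f\<in>sections d. restr L0 (A f) = restr L0 y \<and> pK N K f \<le> C * pK N L0 y"
    using bounded_lift_on_finite[OF norms lin inj L0(1)] by metis
  show ?thesis
  proof (rule that[OF L0 C])
    fix y and M :: "'x set" assume y: "y \<in> sections d" and M: "finite M"
    obtain f where f: "f \<in> sections d" "restr L0 (A f) = restr L0 y" "pK N K f \<le> C * pK N L0 y"
      using lift[OF y] by blast
    have "A f - y \<in> sections d"
      using f(1) y by (intro sections_diff linear_on_sections_in_sections[OF lin])
    moreover have "\<forall>x\<in>L0. (A f - y) x = 0"
      using f(2) by (simp add: restr_eq_iff)
    ultimately obtain z where z: "z \<in> sections d" "\<forall>x\<in>K. z x = 0" "\<forall>x\<in>M \<union> L0. A z x = (A f - y) x"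
      using stable[of "M \<union> L0" "A f - y"] M L0(1) by blast
    show "\<exists>f\<in>sections d. (\<forall>x\<in>M. A f x = y x) \<and> pK N K f \<le> C * pK N L0 y"
    proof (intro bexI conjI)
      show "f - z \<in> sections d" by (rule sections_diff[OF f(1) z(1)])
      show "\<forall>x\<in>M. A (f - z) x = y x"
        using z(3) by (simp add: linear_on_sections_diff[OF lin f(1) z(1)])
      show "pK N K (f - z) \<le> C * pK N L0 y"
        using f(3) z(2) pK_cong[of K "f - z" f N] by simp
    qed
  qed
qed

theorem lemma3p1:
  fixes d :: "'x::countable \<Rightarrow> nat"
    and N :: "'x \<Rightarrow> (nat \<Rightarrow> complex) \<Rightarrow> real"
    and A :: "('x \<Rightarrow> nat \<Rightarrow> complex) \<Rightarrow> ('x \<Rightarrow> nat \<Rightarrow> complex)"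
    and K :: "'x set"
  assumes norms: "\<forall>x. norm_on (d x) (N x)"
    and lin: "linear_on_sections d A"
    and cont: "continuous_map (gamma_top d N) (gamma_top d N) A"
    and inj: "dual_op_injective d A"
    and K: "finite K" "K \<noteq> {}"
  shows "\<exists>\<epsilon>>0. \<exists>K'. finite K' \<and> K' \<noteq> {} \<and>
           scale_set \<epsilon> (Uset d N K') \<subseteq> (gamma_top d N) closure_of (A ` Uset d N K)"
proof -
  obtain L0 C where L0: "finite L0" "K \<subseteq> L0" and C: "C \<ge> 0"
    and solve: "\<And>y M. y \<in> sections d \<Longrightarrow> finite M \<Longrightarrow>
       \<exists>f\<in>sections d. (\<forall>x\<in>M. A f x = y x) \<and> pK N K f \<le> C * pK N L0 y"
    using controlled_local_solutions[OF norms lin inj K(1)] by metis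
  define \<epsilon> where "\<epsilon> = 1 / (C + 1)"
  have \<epsilon>: "\<epsilon> > 0" "C * \<epsilon> < 1" using C by (simp_all add: \<epsilon>_def field_simps)
  show ?thesis
  proof (intro exI[of _ \<epsilon>] exI[of _ L0] conjI subsetI)
    fix y assume "y \<in> scale_set \<epsilon> (Uset d N L0)"
    then obtain g where g: "g \<in> sections d" "pK N L0 g \<le> 1" and y: "y = sc \<epsilon> g"
      by (auto simp: scale_set_def Uset_def sc_def)
    have "y \<in> sections d" "pK N L0 y \<le> \<epsilon>"
      using g \<epsilon>(1) by (simp_all add: y sections_scale pK_scale[OF norms] mult_left_le)
    then show "y \<in> gamma_top d N closure_of A ` Uset d N K"
    proof (intro in_closure_of_gamma_topI)
      fix M :: "'x set" assume "finite M"
      with solve obtain f where "f \<in> sections d" "\<forall>x\<in>M. A f x = y x" "pK N K f \<le> C * pK N L0 y"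
        using \<open>y \<in> sections d\<close> by blast
      moreover have "C * pK N L0 y < 1"
        using mult_left_mono[OF \<open>pK N L0 y \<le> \<epsilon>\<close> C] \<epsilon>(2) by linarith
      ultimately show "\<exists>s\<in>A ` Uset d N K. s \<in> sections d \<and> (\<forall>x\<in>M. s x = y x)"
        by (auto simp: Uset_def linear_on_sections_in_sections[OF lin])
    qed
  qed (use \<epsilon> L0 K in auto)
qed

end
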